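(* For every integer $n\ge 0$ and every complex number $x$, \[ \sum_{j=0}^{n}(-1)^jL_{n-2j}(x)=\sum_{j=0}^{n}\left(\frac{x}{2}\right)^jL_{n-j}(x)=2F_{n+1}(x). \] In particular, with Pell numbers $P_n=F_n(2)$ and Pell–Lucas numbers $Q_n=L_n(2)$, $\sum_{j=0}^n(-1)^jQ_{n-2j}=\sum_{j=0}^nQ_{n-j}=2P_{n+1}$.
   Context: The Fibonacci polynomials $F_n(x)$ and Lucas polynomials $L_n(x)$ are defined by $F_0(x)=0$, $F_1(x)=1$, $L_0(x)=2$, $L_1(x)=x$ and $G_{n+1}(x)=xG_n(x)+G_{n-1}(x)$; they are extended to negative indices by $F_{-n}(x)=(-1)^{n-1}F_n(x)$ and $L_{-n}(x)=(-1)^nL_n(x)$ (equivalently, by the Binet forms $F_n(x)=(\alpha(x)^n-\beta(x)^n)/(\alpha(x)-\beta(x))$, $L_n(x)=\alpha(x)^n+\beta(x)^n$ with $\alpha(x),\beta(x)=(x\pm\sqrt{x^2+4})/2$). *)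

theory Defs
  imports Complex_Main
begin

fun fibp_nat :: "complex \<Rightarrow> nat \<Rightarrow> complex" where
  "fibp_nat x 0 = 0"
| "fibp_nat x (Suc 0) = 1"
| "fibp_nat x (Suc (Suc n)) = x * fibp_nat x (Suc n) + fibp_nat x n"

fun lucp_nat :: "complex \<Rightarrow> nat \<Rightarrow> complex" where
  "lucp_nat x 0 = 2"
| "lucp_nat x (Suc 0) = x"
| "lucp_nat x (Suc (Suc n)) = x * lucp_nat x (Suc n) + lucp_nat x n"

definition fibp :: "complex \<Rightarrow> int \<Rightarrow> complex" where
  "fibp x k = (if k \<ge> 0 then fibp_nat x (nat k)
               else (-1) ^ (nat (-k) - 1) * fibp_nat x (nat (-k)))"

definition lucp :: "complex \<Rightarrow> int \<Rightarrow> complex" where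
  "lucp x k = (if k \<ge> 0 then lucp_nat x (nat k)
               else (-1) ^ nat (-k) * lucp_nat x (nat (-k)))"

end

theory Submission
  imports Defs
begin

text \<open>Both sums satisfy short recurrences. Splitting off the first term, the
  weighted sum S(n) satisfies S(n+1) = L(n+1) + (x/2) S(n), matching
  2F(n+2) = L(n+1) + x F(n+1). Splitting off the first and last terms, the
  alternating sum T(n) satisfies T(n+2) = 2L(n+2) - T(n), because
  (-1)^(n+2) L(-(n+2)) = L(n+2); this matches 2F(n+3) = 2L(n+2) - 2F(n+1),
  which follows from L(m) = F(m+1) + F(m-1).\<close>

lemma fibp_of_nat [simp]: "fibp x (int n) = fibp_nat x n"
  by (simp add: fibp_def)

lemma fibp_of_nat_add_one [simp]: "fibp x (int n + 1) = fibp_nat x (Suc n)"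
  by (simp add: fibp_def nat_add_distrib)

lemma lucp_of_nat [simp]: "lucp x (int n) = lucp_nat x n"
  by (simp add: lucp_def)

lemma lucp_uminus_of_nat: "lucp x (- int n) = (-1) ^ n * lucp_nat x n"
  by (cases "n = 0") (simp_all add: lucp_def)

lemma lucp_nat_add_mult_fibp_nat: "lucp_nat x n + x * fibp_nat x n = 2 * fibp_nat x (Suc n)"
proof (induction n rule: induct_nat_012)
  case (ge2 n)
  have "lucp_nat x (Suc (Suc n)) + x * fibp_nat x (Suc (Suc n))
      = x * (lucp_nat x (Suc n) + x * fibp_nat x (Suc n)) + (lucp_nat x n + x * fibp_nat x n)"
    by (simp add: algebra_simps)
  also have "\<dots> = 2 * (x * fibp_nat x (Suc (Suc n)) + fibp_nat x (Suc n))"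
    unfolding ge2 by (simp only: distrib_left mult.left_commute)
  finally show ?case by simp
qed simp_all

lemma lucp_nat_eq_fibp_nat_add: "lucp_nat x (Suc n) = fibp_nat x (Suc (Suc n)) + fibp_nat x n"
proof (induction n rule: induct_nat_012)
  case (ge2 n)
  have "lucp_nat x (Suc (Suc (Suc n))) = x * lucp_nat x (Suc (Suc n)) + lucp_nat x (Suc n)"
    by simp
  also have "\<dots> = fibp_nat x (Suc (Suc (Suc (Suc n)))) + fibp_nat x (Suc (Suc n))"
    unfolding ge2 by (simp add: algebra_simps)
  finally show ?case .
qed simp_all

lemma sum_half_power_mult_lucp_nat:
  "(\<Sum>j\<le>n. (x / 2) ^ j * lucp_nat x (n - j)) = 2 * fibp_nat x (Suc n)"
proof (induction n)
  case 0
  show ?case by simp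
next
  case (Suc n)
  have "(\<Sum>j\<le>Suc n. (x / 2) ^ j * lucp_nat x (Suc n - j))
      = lucp_nat x (Suc n) + (x / 2) * (\<Sum>j\<le>n. (x / 2) ^ j * lucp_nat x (n - j))"
    by (subst sum.atMost_Suc_shift) (simp add: sum_distrib_left mult.assoc)
  also have "\<dots> = 2 * fibp_nat x (Suc (Suc n))"
    using Suc lucp_nat_add_mult_fibp_nat[of x "Suc n"] by simp
  finally show ?case .
qed

lemma sum_half_power_mult_lucp:
  "(\<Sum>j\<le>n. (x / 2) ^ j * lucp x (int n - int j)) = 2 * fibp x (int n + 1)"
proof -
  have "lucp x (int n - int j) = lucp_nat x (n - j)" if "j \<le> n" for j
    using that lucp_of_nat[of x "n - j"] by (simp add: of_nat_diff)
  then have "(\<Sum>j\<le>n. (x / 2) ^ j * lucp x (int n - int j))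
      = (\<Sum>j\<le>n. (x / 2) ^ j * lucp_nat x (n - j))"
    by (intro sum.cong) simp_all
  also have "\<dots> = 2 * fibp x (int n + 1)"
    using sum_half_power_mult_lucp_nat[of x n] by simp
  finally show ?thesis .
qed

lemma sum_alternating_lucp:
  "(\<Sum>j\<le>n. (-1) ^ j * lucp x (int n - 2 * int j)) = 2 * fibp x (int n + 1)"
proof (induction n rule: nat_induct2)
  case 0
  show ?case by (simp add: lucp_def fibp_def)
next
  case 1
  show ?case by (simp add: lucp_def fibp_def numeral_2_eq_2)
next
  case (step n)
  have last_term: "(-1) ^ Suc n * lucp x (int n - 2 * int (Suc n)) = - lucp_nat x (n + 2)"
    using lucp_uminus_of_nat[of x "n + 2"] by (simp add: algebra_simps)
  have "(\<Sum>j\<le>n + 2. (-1) ^ j * lucp x (int (n + 2) - 2 * int j))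
      = lucp_nat x (n + 2) - (\<Sum>j\<le>Suc n. (-1) ^ j * lucp x (int n - 2 * int j))"
  proof -
    have "(\<Sum>j\<le>Suc n. (-1) ^ Suc j * lucp x (int (n + 2) - 2 * int (Suc j)))
        = - (\<Sum>j\<le>Suc n. (-1) ^ j * lucp x (int n - 2 * int j))"
      by (simp del: sum.atMost_Suc add: sum_negf[symmetric] algebra_simps)
    then show ?thesis
      using sum.atMost_Suc_shift[of "\<lambda>j. (-1) ^ j * lucp x (int (n + 2) - 2 * int j)" "Suc n"]
        lucp_of_nat[of x "n + 2"]
      by (simp del: sum.atMost_Suc)
  qed
  also have "\<dots> = 2 * lucp_nat x (n + 2) - 2 * fibp_nat x (n + 1)"
    using step last_term fibp_of_nat[of x "Suc n"] by (simp add: algebra_simps)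
  also have "\<dots> = 2 * fibp_nat x (n + 3)"
    using lucp_nat_eq_fibp_nat_add[of x "Suc n"] by (simp add: numeral_3_eq_3)
  also have "\<dots> = 2 * fibp x (int (n + 2) + 1)"
    using fibp_of_nat[of x "n + 3"] by (simp add: numeral_3_eq_3)
  finally show ?case .
qed

theorem theorem9:
  fixes n :: nat and x :: complex
  shows "(\<Sum>j=0..n. (-1) ^ j * lucp x (int n - 2 * int j))
           = (\<Sum>j=0..n. (x / 2) ^ j * lucp x (int n - int j))
       \<and> (\<Sum>j=0..n. (x / 2) ^ j * lucp x (int n - int j)) = 2 * fibp x (int n + 1)"
  unfolding atLeast0AtMost sum_alternating_lucp sum_half_power_mult_lucp by simp

end
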